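(* Let $G$ be a graph and $e=uv\in E(G)$. If $m\geq 2$ is an integer and $$P(G-\{e\},m)<\frac{m}{m-1}P(G,m),$$ then $P_{DP}(G,m)<P(G,m)$.
   Context: All graphs are finite and simple; $G-\{e\}$ is $G$ with edge $e$ deleted. $P(G,m)$ denotes the chromatic polynomial of $G$. A cover of a graph $G$ is a pair $\mathcal{H}=(L,H)$ where $H$ is a graph and $L:V(G)\to\mathcal{P}(V(H))$ satisfies: (1) the sets $L(u)$, $u\in V(G)$, partition $V(H)$; (2) for every $u$, $H[L(u)]$ is complete; (3) if $E_H(L(u),L(v))\neq\emptyset$ then $u=v$ or $uv\in E(G)$; (4) if $uv\in E(G)$ then $E_H(L(u),L(v))$ is a matching (possibly empty). Here $E_H(S,U)$ is the set of edges of $H$ between $S$ and $U$. The cover is $m$-fold if $|L(u)|=m$ for all $u$. An $\mathcal{H}$-coloring is an independent set of $H$ of size $|V(G)|$. $P_{DP}(G,\mathcal{H})$ is the number of $\mathcal{H}$-colorings, and $P_{DP}(G,m)$ is the minimum of $P_{DP}(G,\mathcal{H})$ over all $m$-fold covers $\mathcal{H}$ of $G$. *)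

theory Defs
  imports Complex_Main "HOL-Library.FuncSet"
begin

definition graph :: "'a set \<Rightarrow> 'a set set \<Rightarrow> bool" where
  "graph V E \<longleftrightarrow> finite V \<and> (\<forall>e\<in>E. \<exists>x y. e = {x, y} \<and> x \<noteq> y \<and> x \<in> V \<and> y \<in> V)"

definition chrom :: "'a set \<Rightarrow> 'a set set \<Rightarrow> nat \<Rightarrow> nat" where
  "chrom V E m = card {f \<in> V \<rightarrow>\<^sub>E {..<m}. \<forall>x y. {x, y} \<in> E \<longrightarrow> f x \<noteq> f y}"

definition is_cover :: "'a set \<Rightarrow> 'a set set \<Rightarrow> ('a \<Rightarrow> 'b set) \<Rightarrow> 'b set \<Rightarrow> 'b set set \<Rightarrow> bool" where
  "is_cover V E L VH EH \<longleftrightarrow>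
     graph VH EH \<and>
     (\<Union>u\<in>V. L u) = VH \<and>
     (\<forall>u\<in>V. \<forall>v\<in>V. u \<noteq> v \<longrightarrow> L u \<inter> L v = {}) \<and>
     (\<forall>u\<in>V. \<forall>x\<in>L u. \<forall>y\<in>L u. x \<noteq> y \<longrightarrow> {x, y} \<in> EH) \<and>
     (\<forall>u\<in>V. \<forall>v\<in>V. (\<exists>x\<in>L u. \<exists>y\<in>L v. {x, y} \<in> EH) \<longrightarrow> u = v \<or> {u, v} \<in> E) \<and>
     (\<forall>u v. {u, v} \<in> E \<longrightarrow>
        (\<forall>x\<in>L u. \<forall>y\<in>L v. \<forall>y'\<in>L v. {x, y} \<in> EH \<and> {x, y'} \<in> EH \<longrightarrow> y = y') \<and>
        (\<forall>y\<in>L v. \<forall>x\<in>L u. \<forall>x'\<in>L u. {x, y} \<in> EH \<and> {x', y} \<in> EH \<longrightarrow> x = x'))"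

definition is_mfold_cover :: "'a set \<Rightarrow> 'a set set \<Rightarrow> nat \<Rightarrow> ('a \<Rightarrow> 'b set) \<Rightarrow> 'b set \<Rightarrow> 'b set set \<Rightarrow> bool" where
  "is_mfold_cover V E m L VH EH \<longleftrightarrow> is_cover V E L VH EH \<and> (\<forall>u\<in>V. card (L u) = m)"

text \<open>Number of H-colourings: independent sets of H of size |V(G)|.\<close>
definition dp_count :: "'a set \<Rightarrow> 'b set \<Rightarrow> 'b set set \<Rightarrow> nat" where
  "dp_count V VH EH = card {I. I \<subseteq> VH \<and> (\<forall>x\<in>I. \<forall>y\<in>I. {x, y} \<notin> EH) \<and> card I = card V}"

text \<open>DP colour function: minimum over all m-fold covers. Every finite cover is isomorphic
  to one whose vertices lie in the type 'a \<times> nat, so we minimise over those.\<close>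
definition P_DP :: "'a set \<Rightarrow> 'a set set \<Rightarrow> nat \<Rightarrow> nat" where
  "P_DP V E m = Inf {dp_count V VH EH | L VH (EH :: ('a \<times> nat) set set). is_mfold_cover V E m L VH EH}"

end

theory Submission
  imports Defs "HOL-Number_Theory.Cong"
begin

text \<open>For a shift \<open>d \<in> {1..<m}\<close>, take the cover of \<open>G\<close> that is trivial on \<open>G - uv\<close> but matches
  colour \<open>i\<close> at \<open>u\<close> with colour \<open>i + d mod m\<close> at \<open>v\<close>. Its colourings are the proper colourings \<open>f\<close>
  of \<open>G - uv\<close> with \<open>f v \<noteq> f u + d\<close>; writing \<open>s\<^sub>d\<close> for the number with \<open>f v = f u + d\<close>, there are
  \<open>P(G - uv, m) - s\<^sub>d\<close> of them. Proper colourings of \<open>G\<close> are classified by \<open>f v - f u \<noteq> 0\<close>, so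
  \<open>\<Sum>\<^sub>d s\<^sub>d = P(G, m)\<close>, while the hypothesis says \<open>(m - 1) (P(G - uv, m) - P(G, m)) < P(G, m)\<close>.
  Hence some \<open>s\<^sub>d\<close> exceeds \<open>P(G - uv, m) - P(G, m)\<close>, and that cover has fewer than \<open>P(G, m)\<close>
  colourings.\<close>

lemma mod_add_right_cancel_less:
  fixes i j d m :: nat
  assumes "(i + d) mod m = (j + d) mod m" "i < m" "j < m"
  shows "i = j"
  using assms cong_add_rcancel_nat[of i d j m] by (simp add: cong_def)

lemma neq_iff_ex_mod_shift:
  fixes i j m :: nat
  assumes "i < m" "j < m"
  shows "i \<noteq> j \<longleftrightarrow> (\<exists>d\<in>{1..<m}. j = (i + d) mod m)"
proof
  assume "i \<noteq> j"
  define d where "d = (j + m - i) mod m"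
  have "(i + d) mod m = j"
    unfolding d_def using assms by (simp add: mod_add_right_eq)
  moreover have "d \<noteq> 0"
    using \<open>(i + d) mod m = j\<close> \<open>i \<noteq> j\<close> assms(1) by (metis add_0_right mod_less)
  moreover have "d < m"
    unfolding d_def using assms by simp
  ultimately show "\<exists>d\<in>{1..<m}. j = (i + d) mod m" by force
next
  assume "\<exists>d\<in>{1..<m}. j = (i + d) mod m"
  then obtain d where d: "d \<in> {1..<m}" "j = (i + d) mod m" by blast
  show "i \<noteq> j"
  proof
    assume "i = j"
    then have "(0 + i) mod m = (d + i) mod m" using d assms(1) by (simp add: add.commute)
    then show False using mod_add_right_cancel_less[of 0 i m d] d by simp
  qed
qed

lemma graph_edgeD: "graph V E \<Longrightarrow> {a, b} \<in> E \<Longrightarrow> a \<noteq> b \<and> a \<in> V \<and> b \<in> V"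
  unfolding graph_def by (metis doubleton_eq_iff)

definition proper_colourings :: "'a set \<Rightarrow> 'a set set \<Rightarrow> nat \<Rightarrow> ('a \<Rightarrow> nat) set" where
  "proper_colourings V E m = {f \<in> V \<rightarrow>\<^sub>E {..<m}. \<forall>x y. {x, y} \<in> E \<longrightarrow> f x \<noteq> f y}"

lemma chrom_eq_card_proper_colourings: "chrom V E m = card (proper_colourings V E m)"
  unfolding chrom_def proper_colourings_def ..

lemma finite_proper_colourings: "finite V \<Longrightarrow> finite (proper_colourings V E m)"
  unfolding proper_colourings_def by (rule finite_subset[of _ "V \<rightarrow>\<^sub>E {..<m}"]) (auto simp: finite_PiE)

lemma proper_colourings_delete_edge:
  assumes "{u, v} \<in> E"
  shows "proper_colourings V E m = {f \<in> proper_colourings V (E - {{u, v}}) m. f u \<noteq> f v}"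
  using assms unfolding proper_colourings_def by (auto simp: doubleton_eq_iff) metis

definition shift_colourings :: "'a set \<Rightarrow> 'a set set \<Rightarrow> 'a \<Rightarrow> 'a \<Rightarrow> nat \<Rightarrow> nat \<Rightarrow> ('a \<Rightarrow> nat) set" where
  "shift_colourings V E u v m d = {f \<in> proper_colourings V (E - {{u, v}}) m. f v = (f u + d) mod m}"

lemma shift_colourings_subset: "shift_colourings V E u v m d \<subseteq> proper_colourings V (E - {{u, v}}) m"
  unfolding shift_colourings_def by blast

lemma proper_colourings_eq_UN_shift_colourings:
  assumes "{u, v} \<in> E" "u \<in> V" "v \<in> V"
  shows "proper_colourings V E m = (\<Union>d\<in>{1..<m}. shift_colourings V E u v m d)"
proof -
  have "f u \<noteq> f v \<longleftrightarrow> (\<exists>d\<in>{1..<m}. f v = (f u + d) mod m)"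
    if "f \<in> proper_colourings V (E - {{u, v}}) m" for f
    using that assms(2,3) unfolding proper_colourings_def by (intro neq_iff_ex_mod_shift) auto
  then show ?thesis
    unfolding proper_colourings_delete_edge[OF assms(1)] shift_colourings_def by blast
qed

lemma disjoint_shift_colourings:
  assumes "d < m" "d' < m" "d \<noteq> d'"
  shows "shift_colourings V E u v m d \<inter> shift_colourings V E u v m d' = {}"
proof -
  have "f \<notin> shift_colourings V E u v m d'" if "f \<in> shift_colourings V E u v m d" for f
  proof
    assume "f \<in> shift_colourings V E u v m d'"
    then have "(d + f u) mod m = (d' + f u) mod m"
      using that unfolding shift_colourings_def by (simp add: add.commute)
    then show False using mod_add_right_cancel_less assms by blast
  qed
  then show ?thesis by blast
qed

lemma sum_card_shift_colourings:
  assumes "graph V E" "{u, v} \<in> E"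
  shows "(\<Sum>d\<in>{1..<m}. card (shift_colourings V E u v m d)) = chrom V E m"
proof -
  have "finite V" using assms(1) unfolding graph_def by simp
  then have "finite (shift_colourings V E u v m d)" for d
    using finite_proper_colourings shift_colourings_subset by (metis finite_subset)
  moreover have "u \<in> V" "v \<in> V" using graph_edgeD[OF assms] by auto
  ultimately show ?thesis
    unfolding chrom_eq_card_proper_colourings
      proper_colourings_eq_UN_shift_colourings[OF assms(2) \<open>u \<in> V\<close> \<open>v \<in> V\<close>]
    by (intro card_UN_disjoint[symmetric]) (simp_all add: disjoint_shift_colourings)
qed

definition shift_adj :: "'a set set \<Rightarrow> 'a \<Rightarrow> 'a \<Rightarrow> nat \<Rightarrow> nat \<Rightarrow> 'a \<times> nat \<Rightarrow> 'a \<times> nat \<Rightarrow> bool" where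
  "shift_adj E u v m d p q \<longleftrightarrow>
     fst p = fst q \<or> ({fst p, fst q} \<in> E - {{u, v}} \<and> snd p = snd q) \<or>
     (fst p = u \<and> fst q = v \<and> snd q = (snd p + d) mod m) \<or>
     (fst p = v \<and> fst q = u \<and> snd p = (snd q + d) mod m)"

definition shift_cover_edges :: "'a set \<Rightarrow> 'a set set \<Rightarrow> 'a \<Rightarrow> 'a \<Rightarrow> nat \<Rightarrow> nat \<Rightarrow> ('a \<times> nat) set set" where
  "shift_cover_edges V E u v m d =
     {{p, q} | p q. p \<in> V \<times> {..<m} \<and> q \<in> V \<times> {..<m} \<and> p \<noteq> q \<and> shift_adj E u v m d p q}"

lemma shift_adj_commute: "shift_adj E u v m d p q \<longleftrightarrow> shift_adj E u v m d q p"
  unfolding shift_adj_def by (auto simp: insert_commute)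

lemma doubleton_in_shift_cover_edges_iff:
  "{p, q} \<in> shift_cover_edges V E u v m d \<longleftrightarrow>
     p \<in> V \<times> {..<m} \<and> q \<in> V \<times> {..<m} \<and> p \<noteq> q \<and> shift_adj E u v m d p q"
  unfolding shift_cover_edges_def by (auto simp: doubleton_eq_iff shift_adj_commute)

lemma shift_adj_unique:
  assumes "graph V E" "{a, b} \<in> E" "j < m" "j' < m"
    and "shift_adj E u v m d (a, i) (b, j)" "shift_adj E u v m d (a, i) (b, j')"
  shows "j = j'"
  using assms graph_edgeD[OF assms(1,2)] mod_add_right_cancel_less[of j d m j']
  unfolding shift_adj_def by (auto simp: doubleton_eq_iff)

lemma is_mfold_cover_shift_cover:
  assumes G: "graph V E" and uv: "{u, v} \<in> E"
  shows "is_mfold_cover V E m (\<lambda>x. {x} \<times> {..<m}) (V \<times> {..<m}) (shift_cover_edges V E u v m d)"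
proof -
  let ?L = "\<lambda>x. {x} \<times> {..<m}" and ?EH = "shift_cover_edges V E u v m d"
  have "graph (V \<times> {..<m}) ?EH"
    using G unfolding graph_def shift_cover_edges_def by blast
  moreover have "\<forall>a\<in>V. \<forall>x\<in>?L a. \<forall>y\<in>?L a. x \<noteq> y \<longrightarrow> {x, y} \<in> ?EH"
    by (auto simp: doubleton_in_shift_cover_edges_iff shift_adj_def)
  moreover have "\<forall>a\<in>V. \<forall>b\<in>V. (\<exists>x\<in>?L a. \<exists>y\<in>?L b. {x, y} \<in> ?EH) \<longrightarrow> a = b \<or> {a, b} \<in> E"
    using uv by (auto simp: doubleton_in_shift_cover_edges_iff shift_adj_def insert_commute)
  moreover have "\<forall>a b. {a, b} \<in> E \<longrightarrow>
      (\<forall>x\<in>?L a. \<forall>y\<in>?L b. \<forall>y'\<in>?L b. {x, y} \<in> ?EH \<and> {x, y'} \<in> ?EH \<longrightarrow> y = y') \<and>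
      (\<forall>y\<in>?L b. \<forall>x\<in>?L a. \<forall>x'\<in>?L a. {x, y} \<in> ?EH \<and> {x', y} \<in> ?EH \<longrightarrow> x = x')"
  proof (intro allI impI conjI ballI)
    fix a b x y y' assume ab: "{a, b} \<in> E" and "x \<in> ?L a" "y \<in> ?L b" "y' \<in> ?L b"
      and "{x, y} \<in> ?EH \<and> {x, y'} \<in> ?EH"
    then show "y = y'"
      using shift_adj_unique[OF G ab] unfolding doubleton_in_shift_cover_edges_iff by auto
  next
    fix a b y x x' assume "{a, b} \<in> E" and "y \<in> ?L b" "x \<in> ?L a" "x' \<in> ?L a"
      and "{x, y} \<in> ?EH \<and> {x', y} \<in> ?EH"
    moreover have ba: "{b, a} \<in> E" using \<open>{a, b} \<in> E\<close> by (simp add: insert_commute)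
    ultimately show "x = x'"
      using shift_adj_unique[OF G ba] unfolding insert_commute[of _ y]
      unfolding doubleton_in_shift_cover_edges_iff by auto
  qed
  moreover have "(\<Union>x\<in>V. ?L x) = V \<times> {..<m}" "\<forall>a\<in>V. card (?L a) = m"
    "\<forall>a\<in>V. \<forall>b\<in>V. a \<noteq> b \<longrightarrow> ?L a \<inter> ?L b = {}"
    by (auto simp: card_cartesian_product)
  ultimately show ?thesis
    unfolding is_mfold_cover_def is_cover_def by (intro conjI) assumption+
qed

lemma transversal_eq_graph:
  assumes "finite V" "I \<subseteq> V \<times> C" "inj_on fst I" "card I = card V"
  obtains f where "f \<in> V \<rightarrow>\<^sub>E C" "I = (\<lambda>x. (x, f x)) ` V"
proof -
  have "fst ` I \<subseteq> V" "card (fst ` I) = card V"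
    using assms(2-4) by (auto simp: card_image)
  then have fstI: "fst ` I = V"
    using assms(1) by (simp add: card_subset_eq)
  define g where "g = the_inv_into I fst"
  have g: "g x \<in> I" "fst (g x) = x" if "x \<in> V" for x
    unfolding g_def using that fstI assms(3)
    by (auto intro: the_inv_into_into f_the_inv_into_f)
  define f where "f = restrict (\<lambda>x. snd (g x)) V"
  have graph_g: "(x, f x) = g x" if "x \<in> V" for x
    unfolding f_def using g(2)[OF that] that by (simp add: prod_eq_iff)
  show ?thesis
  proof
    show "f \<in> V \<rightarrow>\<^sub>E C"
      unfolding f_def using g(1) assms(2) by (auto dest!: subsetD)
    have "I = g ` V"
      unfolding g_def fstI[symmetric] using the_inv_into_onto[OF assms(3)] by simp
    then show "I = (\<lambda>x. (x, f x)) ` V"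
      using graph_g by simp
  qed
qed

lemma dp_count_shift_cover_le:
  assumes G: "graph V E" and uv: "{u, v} \<in> E"
  shows "dp_count V (V \<times> {..<m}) (shift_cover_edges V E u v m d)
           \<le> card (proper_colourings V (E - {{u, v}}) m - shift_colourings V E u v m d)"
proof -
  let ?EH = "shift_cover_edges V E u v m d"
    and ?C = "proper_colourings V (E - {{u, v}}) m - shift_colourings V E u v m d"
  have finV: "finite V" using G unfolding graph_def by simp
  have "I \<in> (\<lambda>f. (\<lambda>x. (x, f x)) ` V) ` ?C"
    if I: "I \<subseteq> V \<times> {..<m}" "\<forall>p\<in>I. \<forall>q\<in>I. {p, q} \<notin> ?EH" "card I = card V" for I
  proof -
    have indep: "\<not> shift_adj E u v m d p q" if "p \<in> I" "q \<in> I" "p \<noteq> q" for p q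
      using I(1,2) that unfolding doubleton_in_shift_cover_edges_iff by blast
    then have "inj_on fst I"
      unfolding shift_adj_def by (meson inj_onI)
    then obtain f where f: "f \<in> V \<rightarrow>\<^sub>E {..<m}" and If: "I = (\<lambda>x. (x, f x)) ` V"
      using transversal_eq_graph[OF finV I(1) _ I(3)] by blast
    have nadj: "\<not> shift_adj E u v m d (x, f x) (y, f y)" if "x \<in> V" "y \<in> V" "x \<noteq> y" for x y
      using indep If that by simp
    have "f x \<noteq> f y" if "{x, y} \<in> E - {{u, v}}" for x y
      using nadj[of x y] graph_edgeD[OF G, of x y] that unfolding shift_adj_def by simp
    moreover have "f v \<noteq> (f u + d) mod m"
      using nadj[of u v] graph_edgeD[OF G uv] unfolding shift_adj_def by simp
    ultimately have "f \<in> ?C"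
      using f unfolding proper_colourings_def shift_colourings_def by simp
    then show ?thesis using If by blast
  qed
  then have "{I. I \<subseteq> V \<times> {..<m} \<and> (\<forall>p\<in>I. \<forall>q\<in>I. {p, q} \<notin> ?EH) \<and> card I = card V}
      \<subseteq> (\<lambda>f. (\<lambda>x. (x, f x)) ` V) ` ?C"
    by blast
  moreover have "finite ?C"
    using finite_proper_colourings[OF finV] by blast
  ultimately show ?thesis
    unfolding dp_count_def by (meson card_image_le card_mono finite_imageI le_trans)
qed

lemma P_DP_le_dp_count:
  fixes V :: "'a set" and EH :: "('a \<times> nat) set set"
  assumes "is_mfold_cover V E m L VH EH"
  shows "P_DP V E m \<le> dp_count V VH EH"
  unfolding P_DP_def
  by (rule cInf_lower[OF _ bdd_below_bot]) (use assms in blast)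

lemma P_DP_add_card_shift_colourings_le:
  assumes G: "graph V E" and uv: "{u, v} \<in> E"
  shows "P_DP V E m + card (shift_colourings V E u v m d) \<le> chrom V (E - {{u, v}}) m"
proof -
  have "finite (proper_colourings V (E - {{u, v}}) m)"
    using G finite_proper_colourings unfolding graph_def by blast
  then have "card (proper_colourings V (E - {{u, v}}) m - shift_colourings V E u v m d)
      + card (shift_colourings V E u v m d) = chrom V (E - {{u, v}}) m"
    unfolding chrom_eq_card_proper_colourings
    by (metis card_Diff_subset card_mono finite_subset le_add_diff_inverse2 shift_colourings_subset)
  moreover have "P_DP V E m
      \<le> card (proper_colourings V (E - {{u, v}}) m - shift_colourings V E u v m d)"
    using P_DP_le_dp_count[OF is_mfold_cover_shift_cover[OF assms]] dp_count_shift_cover_le[OF assms]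
    by (rule le_trans)
  ultimately show ?thesis by linarith
qed

theorem mainTheorem9:
  fixes V :: "'a set" and E :: "'a set set" and e :: "'a set" and m :: nat
  assumes "graph V E" and "e \<in> E" and "m \<ge> 2"
    and "real (chrom V (E - {e}) m) < real m / (real m - 1) * real (chrom V E m)"
  shows "P_DP V E m < chrom V E m"
proof -
  obtain u v where e: "e = {u, v}"
    using assms(1,2) unfolding graph_def by blast
  let ?A = "real (chrom V (E - {e}) m)" and ?B = "real (chrom V E m)"
    and ?s = "\<lambda>d. real (card (shift_colourings V E u v m d))"
  have "(m - 1) * (?A - ?B) < ?B"
    using assms(3,4) by (simp add: of_nat_diff field_simps)
  moreover have "(\<Sum>d\<in>{1..<m}. ?s d) = ?B"
    using sum_card_shift_colourings[OF assms(1,2)[unfolded e]] e by (simp flip: of_nat_sum)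
  ultimately have "\<exists>d\<in>{1..<m}. ?A - ?B < ?s d"
    using sum_bounded_above[of "{1..<m}" ?s "?A - ?B"] by (force simp: not_less)
  then obtain d where "?A - ?B < ?s d" ..
  moreover have "real (P_DP V E m) + ?s d \<le> ?A"
    using P_DP_add_card_shift_colourings_le[OF assms(1,2)[unfolded e], of m d] e
    by (simp flip: of_nat_add)
  ultimately show ?thesis by simp
qed

end
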